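(* Let $U=\{\xi_1,\dots,\xi_p\}\subset\mathbb{R}^k$ be finite, and for $j\in\Lambda=\{1,\dots,m\}$ let $f_j:\mathbb{R}^n\times U\to\mathbb{R}$ be such that $x\mapsto f_j(x,\xi_i)$ is continuously differentiable and convex for each $i\in\bar\Lambda=\{1,\dots,p\}$. Let $\{x^k\}$ be the sequence of iterates generated by Algorithm 1 (described in the context). If $\tilde x\in\mathbb{R}^n$ and $k$ is an index such that $f_j(\tilde x,\xi_i)\le f_j(x^k,\xi_i)$ for all $i\in\bar\Lambda$, $j\in\Lambda$, then $$\|\tilde x-x^{k+1}\|^2\le \|\tilde x-x^k\|^2+\|x^k-x^{k+1}\|^2 .$$
   Context: Let $\Phi_j(x)=\max_{i\in\bar\Lambda} f_j(x,\xi_i)$ and $\Phi=(\Phi_1,\dots,\Phi_m)$. For $x\in\mathbb{R}^n$, let $\vartheta_x(t)=\max_{j\in\Lambda}\max_{i\in\bar\Lambda}\{f_j(x,\xi_i)+\nabla f_j(x,\xi_i)^Tt-\Phi_j(x)\}$, let $t(x)$ be the unique minimizer over $t\in\mathbb{R}^n$ of $\vartheta_x(t)+\frac12\|t\|^2$, and $\Theta(x)=\vartheta_x(t(x))+\frac12\|t(x)\|^2$ its optimal value. Algorithm 1: choose $\epsilon>0$, $\beta\in(0,1)$, $x^0\in\mathbb{R}^n$, set $k=0$. Step 2: compute $t^k=t(x^k)$ and $\Theta(x^k)$. Step 3: if $|\Theta(x^k)|<\epsilon$, stop. Step 4: let $\alpha_k$ be the largest $\alpha\in\{1/2^r:r=1,2,3,\dots\}$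 such that for all $j\in\Lambda$, $\Phi_j(x^k+\alpha t^k)\le\Phi_j(x^k)+\alpha\beta\big(\max_{i\in\bar\Lambda}\{f_j(x^k,\xi_i)+\nabla f_j(x^k,\xi_i)^Tt^k\}-\Phi_j(x^k)\big)$. Step 5: set $x^{k+1}=x^k+\alpha_kt^k$, $k:=k+1$, go to Step 2. Gradients are with respect to $x$. *)

theory Defs
  imports "HOL-Analysis.Analysis"
begin

text \<open>Index sets: Lambda = {1..m} (objectives), bar Lambda = {1..p} (scenarios xi_1..xi_p).
  f j x u is f_j(x,u); g j i x is the gradient of x -> f_j(x, xi_i) at x.\<close>

definition Phi :: "(nat \<Rightarrow> 'x \<Rightarrow> 'u \<Rightarrow> real) \<Rightarrow> (nat \<Rightarrow> 'u) \<Rightarrow> nat \<Rightarrow> nat \<Rightarrow> 'x \<Rightarrow> real" where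
  "Phi f \<xi> p j x = Max ((\<lambda>i. f j x (\<xi> i)) ` {1..p})"

definition vartheta ::
  "(nat \<Rightarrow> ('a::real_inner) \<Rightarrow> 'u \<Rightarrow> real) \<Rightarrow> (nat \<Rightarrow> nat \<Rightarrow> 'a \<Rightarrow> 'a) \<Rightarrow> (nat \<Rightarrow> 'u)
    \<Rightarrow> nat \<Rightarrow> nat \<Rightarrow> 'a \<Rightarrow> 'a \<Rightarrow> real" where
  "vartheta f g \<xi> m p x t =
     Max ((\<lambda>j. Max ((\<lambda>i. f j x (\<xi> i) + g j i x \<bullet> t - Phi f \<xi> p j x) ` {1..p})) ` {1..m})"

definition tdir ::
  "(nat \<Rightarrow> ('a::real_inner) \<Rightarrow> 'u \<Rightarrow> real) \<Rightarrow> (nat \<Rightarrow> nat \<Rightarrow> 'a \<Rightarrow> 'a) \<Rightarrow> (nat \<Rightarrow> 'u)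
    \<Rightarrow> nat \<Rightarrow> nat \<Rightarrow> 'a \<Rightarrow> 'a" where
  "tdir f g \<xi> m p x = (THE t. \<forall>s. vartheta f g \<xi> m p x t + (norm t)\<^sup>2 / 2
                                   \<le> vartheta f g \<xi> m p x s + (norm s)\<^sup>2 / 2)"

definition Theta ::
  "(nat \<Rightarrow> ('a::real_inner) \<Rightarrow> 'u \<Rightarrow> real) \<Rightarrow> (nat \<Rightarrow> nat \<Rightarrow> 'a \<Rightarrow> 'a) \<Rightarrow> (nat \<Rightarrow> 'u)
    \<Rightarrow> nat \<Rightarrow> nat \<Rightarrow> 'a \<Rightarrow> real" where
  "Theta f g \<xi> m p x = (let t = tdir f g \<xi> m p x in vartheta f g \<xi> m p x t + (norm t)\<^sup>2 / 2)"

definition armijo ::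
  "(nat \<Rightarrow> ('a::real_inner) \<Rightarrow> 'u \<Rightarrow> real) \<Rightarrow> (nat \<Rightarrow> nat \<Rightarrow> 'a \<Rightarrow> 'a) \<Rightarrow> (nat \<Rightarrow> 'u)
    \<Rightarrow> nat \<Rightarrow> nat \<Rightarrow> real \<Rightarrow> 'a \<Rightarrow> 'a \<Rightarrow> real \<Rightarrow> bool" where
  "armijo f g \<xi> m p \<beta> x t \<alpha> \<longleftrightarrow>
     (\<forall>j\<in>{1..m}. Phi f \<xi> p j (x + \<alpha> *\<^sub>R t) \<le> Phi f \<xi> p j x
        + \<alpha> * \<beta> * (Max ((\<lambda>i. f j x (\<xi> i) + g j i x \<bullet> t) ` {1..p}) - Phi f \<xi> p j x))"

text \<open>xs is generated by Algorithm 1 up to (and including) producing iterate k+1: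
  Steps 2-5 were executed at every l \<le> k without stopping.\<close>
definition alg1_upto ::
  "(nat \<Rightarrow> ('a::real_inner) \<Rightarrow> 'u \<Rightarrow> real) \<Rightarrow> (nat \<Rightarrow> nat \<Rightarrow> 'a \<Rightarrow> 'a) \<Rightarrow> (nat \<Rightarrow> 'u)
    \<Rightarrow> nat \<Rightarrow> nat \<Rightarrow> real \<Rightarrow> real \<Rightarrow> (nat \<Rightarrow> 'a) \<Rightarrow> nat \<Rightarrow> bool" where
  "alg1_upto f g \<xi> m p \<epsilon> \<beta> xs k \<longleftrightarrow>
     (\<forall>l\<le>k. \<not> \<bar>Theta f g \<xi> m p (xs l)\<bar> < \<epsilon> \<and>
       (\<exists>\<alpha>. (\<exists>r::nat. r \<ge> 1 \<and> \<alpha> = 1 / 2 ^ r)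
           \<and> armijo f g \<xi> m p \<beta> (xs l) (tdir f g \<xi> m p (xs l)) \<alpha>
           \<and> (\<forall>r::nat. r \<ge> 1 \<longrightarrow> armijo f g \<xi> m p \<beta> (xs l) (tdir f g \<xi> m p (xs l)) (1 / 2 ^ r)
                 \<longrightarrow> 1 / 2 ^ r \<le> \<alpha>)
           \<and> xs (Suc l) = xs l + \<alpha> *\<^sub>R tdir f g \<xi> m p (xs l)))"

end

theory Submission
  imports Defs
begin

text \<open>Put \<open>x = x\<^sup>k\<close>, \<open>t = t(x)\<close> and \<open>d = xt - x\<close>. By the gradient inequality for the convex
  functions \<open>f\<^sub>j(\<cdot>, \<xi>\<^sub>i)\<close> and \<open>f\<^sub>j(xt, \<xi>\<^sub>i) \<le> f\<^sub>j(x, \<xi>\<^sub>i)\<close>, every gradient makes a non-positive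
  inner product with \<open>d\<close>, so \<open>\<vartheta>\<^sub>x(t + \<tau> d) \<le> \<vartheta>\<^sub>x(t)\<close> for \<open>\<tau> \<ge> 0\<close>. Minimality of \<open>t\<close> for
  \<open>\<vartheta>\<^sub>x + \<parallel>\<cdot>\<parallel>\<^sup>2/2\<close> then gives \<open>\<parallel>t\<parallel> \<le> \<parallel>t + \<tau> d\<parallel>\<close> for all \<open>\<tau> > 0\<close>, i.e. \<open>t \<bullet> d \<ge> 0\<close>, and
  expanding \<open>\<parallel>d - \<alpha> t\<parallel>\<^sup>2\<close> with \<open>\<alpha> \<ge> 0\<close> yields the claim. That the description \<open>THE\<close> in the
  definition of \<open>t(x)\<close> really denotes a minimizer follows because \<open>\<vartheta>\<^sub>x\<close> is a continuous,
  convex maximum of affine functions: \<open>\<vartheta>\<^sub>x + \<parallel>\<cdot>\<parallel>\<^sup>2/2\<close> is coercive and strongly convex.\<close>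

lemma convex_on_above_derivative:
  fixes F :: "'a::real_normed_vector \<Rightarrow> real"
  assumes convex: "convex_on UNIV F" and deriv: "(F has_derivative L) (at x)"
  shows "L (y - x) \<le> F y - F x"
proof -
  define \<phi> where "\<phi> s = F (x + s *\<^sub>R (y - x))" for s :: real
  have "convex_on UNIV \<phi>"
  proof (rule convex_onI)
    fix t a b :: real assume "0 < t" "t < 1"
    moreover have "x + ((1 - t) *\<^sub>R a + t *\<^sub>R b) *\<^sub>R (y - x)
        = (1 - t) *\<^sub>R (x + a *\<^sub>R (y - x)) + t *\<^sub>R (x + b *\<^sub>R (y - x))"
      by (simp add: algebra_simps)
    ultimately show "\<phi> ((1 - t) *\<^sub>R a + t *\<^sub>R b) \<le> (1 - t) * \<phi> a + t * \<phi> b"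
      unfolding \<phi>_def using convex_onD[OF convex, of t] by auto
  qed simp
  moreover have "(\<phi> has_derivative (\<lambda>h. L (h *\<^sub>R (y - x)))) (at 0)"
    unfolding \<phi>_def using deriv
    by (auto intro!: derivative_eq_intros has_derivative_compose[of "\<lambda>s. x + s *\<^sub>R (y - x)" _ 0 UNIV F L,
          simplified o_def])
  then have "(\<phi> has_field_derivative L (y - x)) (at 0)"
    using linear_scale[OF has_derivative_linear[OF deriv]]
    by (simp add: has_field_derivative_def mult_commute_abs)
  ultimately have "\<phi> 1 - \<phi> 0 \<ge> L (y - x) * (1 - 0)"
    by (intro convex_on_imp_above_tangent) auto
  then show ?thesis unfolding \<phi>_def by simp
qed

lemma convex_on_max:
  assumes "convex_on S f" "convex_on S g"
  shows "convex_on S (\<lambda>x. max (f x) (g x))"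
proof (rule convex_onI)
  show "convex S" using assms(1) by (rule convex_on_imp_convex)
next
  fix t :: real and a b assume t: "0 < t" "t < 1" and ab: "a \<in> S" "b \<in> S"
  have "f ((1 - t) *\<^sub>R a + t *\<^sub>R b) \<le> (1 - t) * max (f a) (g a) + t * max (f b) (g b)"
    using convex_onD[OF assms(1), of t a b] t ab
    by (smt (verit, best) max.cobounded1 mult_left_mono)
  moreover have "g ((1 - t) *\<^sub>R a + t *\<^sub>R b) \<le> (1 - t) * max (f a) (g a) + t * max (f b) (g b)"
    using convex_onD[OF assms(2), of t a b] t ab
    by (smt (verit, best) max.cobounded2 mult_left_mono)
  ultimately show "max (f ((1 - t) *\<^sub>R a + t *\<^sub>R b)) (g ((1 - t) *\<^sub>R a + t *\<^sub>R b))
      \<le> (1 - t) * max (f a) (g a) + t * max (f b) (g b)" by simp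
qed

lemma convex_on_inner_add_const:
  "convex S \<Longrightarrow> convex_on S (\<lambda>t. a \<bullet> t + c)"
  by (rule convex_onI) (auto simp: inner_simps algebra_simps)

lemma convex_on_Max:
  assumes "finite I" "I \<noteq> {}" "\<And>i. i \<in> I \<Longrightarrow> convex_on S (F i)"
  shows "convex_on S (\<lambda>x. Max ((\<lambda>i. F i x) ` I))"
  using assms
proof (induction I rule: finite_ne_induct)
  case (insert i I)
  then have "convex_on S (\<lambda>x. max (F i x) (Max ((\<lambda>i. F i x) ` I)))"
    by (intro convex_on_max) auto
  with insert show ?case by simp
qed simp

lemma continuous_on_Max:
  fixes F :: "'i \<Rightarrow> 'a::topological_space \<Rightarrow> real"
  assumes "finite I" "I \<noteq> {}" "\<And>i. i \<in> I \<Longrightarrow> continuous_on S (F i)"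
  shows "continuous_on S (\<lambda>x. Max ((\<lambda>i. F i x) ` I))"
  using assms
proof (induction I rule: finite_ne_induct)
  case (insert i I)
  then have "continuous_on S (\<lambda>x. max (F i x) (Max ((\<lambda>i. F i x) ` I)))"
    by (intro continuous_on_max) auto
  with insert show ?case by simp
qed simp

definition prox_minimizer :: "('a::real_inner \<Rightarrow> real) \<Rightarrow> 'a \<Rightarrow> bool" where
  "prox_minimizer V t \<longleftrightarrow> (\<forall>s. V t + (norm t)\<^sup>2 / 2 \<le> V s + (norm s)\<^sup>2 / 2)"

lemma prox_minimizer_unique:
  fixes V :: "'a::real_inner \<Rightarrow> real"
  assumes convex: "convex_on UNIV V"
    and min1: "prox_minimizer V t1" and min2: "prox_minimizer V t2"
  shows "t1 = t2"
proof (rule ccontr)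
  assume "t1 \<noteq> t2"
  define tm where "tm = (1/2) *\<^sub>R t1 + (1/2) *\<^sub>R t2"
  have "V tm \<le> V t1 / 2 + V t2 / 2"
    using convex_onD[OF convex, of "1/2" t1 t2] unfolding tm_def by simp
  moreover have "(norm tm)\<^sup>2 = (norm t1)\<^sup>2 / 2 + (norm t2)\<^sup>2 / 2 - (norm (t1 - t2))\<^sup>2 / 4"
    unfolding tm_def power2_norm_eq_inner by (simp add: inner_simps inner_commute field_simps)
  moreover have "(norm (t1 - t2))\<^sup>2 > 0"
    using \<open>t1 \<noteq> t2\<close> by simp
  moreover have "V t1 + (norm t1)\<^sup>2 / 2 \<le> V tm + (norm tm)\<^sup>2 / 2"
    "V t2 + (norm t2)\<^sup>2 / 2 \<le> V tm + (norm tm)\<^sup>2 / 2"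
    using min1 min2 unfolding prox_minimizer_def by auto
  ultimately show False by linarith
qed

lemma prox_minimizer_exists:
  fixes V :: "'a::euclidean_space \<Rightarrow> real"
  assumes cont: "continuous_on UNIV V" and minorant: "\<And>t. c + a \<bullet> t \<le> V t"
  shows "\<exists>t. prox_minimizer V t"
proof -
  define h where "h t = V t + (norm t)\<^sup>2 / 2" for t
  define R where "R = 2 * norm a + 2 * \<bar>V 0 - c\<bar> + 2"
  have outside: "h 0 < h t" if "R < norm t" for t
  proof -
    let ?r = "norm t"
    have "\<bar>V 0 - c\<bar> + 1 < ?r / 2 - norm a" "1 \<le> ?r"
      using that unfolding R_def by (simp_all add: field_simps) (smt (verit) norm_ge_zero)
    then have "V 0 - c < ?r * (?r / 2 - norm a)"
      by (smt (verit) mult_le_cancel_right1)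
    moreover have "?r * (?r / 2 - norm a) = ?r\<^sup>2 / 2 - norm a * ?r"
      by (simp add: power2_eq_square algebra_simps)
    moreover have "- (norm a * ?r) \<le> a \<bullet> t"
      using Cauchy_Schwarz_ineq2[of a t] by linarith
    ultimately have "V 0 < V t + ?r\<^sup>2 / 2"
      using minorant[of t] by linarith
    then show ?thesis
      unfolding h_def by simp
  qed
  have "0 \<in> cball (0::'a) R"
    unfolding R_def by simp
  moreover have "continuous_on (cball 0 R) h"
    unfolding h_def by (intro continuous_intros continuous_on_subset[OF cont]) auto
  ultimately obtain t0 where t0: "\<And>s. s \<in> cball 0 R \<Longrightarrow> h t0 \<le> h s"
    using continuous_attains_inf[OF compact_cball, of 0 R h] by blast
  have "h t0 \<le> h s" for s
  proof (cases "s \<in> cball 0 R")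
    case False
    then have "h 0 < h s"
      by (intro outside) simp
    with t0[of 0] \<open>0 \<in> cball 0 R\<close> show ?thesis by simp
  qed (rule t0)
  then show ?thesis
    unfolding prox_minimizer_def h_def by blast
qed

lemma inner_nonneg_if_norm_le_norm_add_scaleR:
  fixes t d :: "'a::real_inner"
  assumes "\<And>\<tau>. \<tau> > 0 \<Longrightarrow> norm t \<le> norm (t + \<tau> *\<^sub>R d)"
  shows "0 \<le> t \<bullet> d"
proof (rule ccontr)
  assume neg: "\<not> 0 \<le> t \<bullet> d"
  then have "0 < d \<bullet> d" by auto
  define \<tau> where "\<tau> = - (t \<bullet> d) / (d \<bullet> d)"
  have "\<tau> > 0"
    unfolding \<tau>_def using neg \<open>0 < d \<bullet> d\<close> by (simp add: divide_neg_pos)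
  then have "(norm t)\<^sup>2 \<le> (norm (t + \<tau> *\<^sub>R d))\<^sup>2"
    using assms by simp
  also have "\<dots> = (norm t)\<^sup>2 + \<tau> * (2 * (t \<bullet> d) + \<tau> * (d \<bullet> d))"
    unfolding power2_norm_eq_inner by (simp add: inner_simps inner_commute algebra_simps)
  also have "\<tau> * (2 * (t \<bullet> d) + \<tau> * (d \<bullet> d)) = \<tau> * (t \<bullet> d)"
    unfolding \<tau>_def using \<open>0 < d \<bullet> d\<close> by (simp add: field_simps)
  finally show False
    using mult_pos_neg[of \<tau> "t \<bullet> d"] \<open>\<tau> > 0\<close> neg by linarith
qed

lemma prox_minimizer_inner_nonneg:
  assumes "prox_minimizer V t" and "\<And>\<tau>. \<tau> \<ge> 0 \<Longrightarrow> V (t + \<tau> *\<^sub>R d) \<le> V t"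
  shows "0 \<le> t \<bullet> d"
proof (rule inner_nonneg_if_norm_le_norm_add_scaleR)
  fix \<tau> :: real assume "\<tau> > 0"
  have "V t + (norm t)\<^sup>2 / 2 \<le> V (t + \<tau> *\<^sub>R d) + (norm (t + \<tau> *\<^sub>R d))\<^sup>2 / 2"
    using assms(1) unfolding prox_minimizer_def by blast
  then have "(norm t)\<^sup>2 \<le> (norm (t + \<tau> *\<^sub>R d))\<^sup>2"
    using assms(2)[of \<tau>] \<open>\<tau> > 0\<close> by linarith
  then show "norm t \<le> norm (t + \<tau> *\<^sub>R d)"
    by (simp add: power2_le_iff_abs_le)
qed

lemma norm_diff_scaleR_square_le:
  fixes t d :: "'a::real_inner"
  assumes "0 \<le> \<alpha>" "0 \<le> t \<bullet> d"
  shows "(norm (d - \<alpha> *\<^sub>R t))\<^sup>2 \<le> (norm d)\<^sup>2 + (norm (\<alpha> *\<^sub>R t))\<^sup>2"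
proof -
  have "(norm (d - \<alpha> *\<^sub>R t))\<^sup>2 = (norm d)\<^sup>2 - 2 * \<alpha> * (t \<bullet> d) + (norm (\<alpha> *\<^sub>R t))\<^sup>2"
    unfolding power2_norm_eq_inner by (simp add: inner_simps inner_commute algebra_simps)
  then show ?thesis
    using assms by (simp add: mult_nonneg_nonneg)
qed

lemma vartheta_ge:
  assumes "j \<in> {1..m}" "i \<in> {1..p}"
  shows "f j x (\<xi> i) + g j i x \<bullet> t - Phi f \<xi> p j x \<le> vartheta f g \<xi> m p x t"
  unfolding vartheta_def using assms
  by (intro Max.coboundedI[THEN order_trans[rotated]]) (auto intro: Max_ge)

lemma vartheta_le:
  assumes "m \<ge> 1" "p \<ge> 1"
    and "\<And>j i. j \<in> {1..m} \<Longrightarrow> i \<in> {1..p} \<Longrightarrow> f j x (\<xi> i) + g j i x \<bullet> t - Phi f \<xi> p j x \<le> c"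
  shows "vartheta f g \<xi> m p x t \<le> c"
  unfolding vartheta_def using assms by (auto simp: Max_le_iff)

lemma continuous_on_vartheta:
  assumes "m \<ge> 1" "p \<ge> 1"
  shows "continuous_on UNIV (vartheta f g \<xi> m p x)"
  unfolding vartheta_def using assms
  by (intro continuous_on_Max continuous_intros) auto

lemma convex_on_vartheta:
  assumes "m \<ge> 1" "p \<ge> 1"
  shows "convex_on UNIV (vartheta f g \<xi> m p x)"
proof -
  have "convex_on UNIV (\<lambda>t. f j x (\<xi> i) + g j i x \<bullet> t - Phi f \<xi> p j x)" for i j
    using convex_on_inner_add_const[of UNIV "g j i x" "f j x (\<xi> i) - Phi f \<xi> p j x"]
    by (simp add: algebra_simps)
  then show ?thesis
    unfolding vartheta_def using assms by (intro convex_on_Max) auto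
qed

lemma vartheta_descent:
  assumes "m \<ge> 1" "p \<ge> 1" "\<tau> \<ge> 0"
    and descent: "\<And>j i. j \<in> {1..m} \<Longrightarrow> i \<in> {1..p} \<Longrightarrow> g j i x \<bullet> d \<le> 0"
  shows "vartheta f g \<xi> m p x (t + \<tau> *\<^sub>R d) \<le> vartheta f g \<xi> m p x t"
proof (rule vartheta_le[OF \<open>m \<ge> 1\<close> \<open>p \<ge> 1\<close>])
  fix j i assume ji: "j \<in> {1..m}" "i \<in> {1..p}"
  have "\<tau> * (g j i x \<bullet> d) \<le> 0"
    using descent[OF ji] \<open>\<tau> \<ge> 0\<close> by (simp add: mult_nonneg_nonpos)
  then show "f j x (\<xi> i) + g j i x \<bullet> (t + \<tau> *\<^sub>R d) - Phi f \<xi> p j x \<le> vartheta f g \<xi> m p x t"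
    using vartheta_ge[OF ji, of f x \<xi> g t] by (simp add: inner_add_right)
qed

lemma tdir_prox_minimizer:
  fixes f :: "nat \<Rightarrow> 'a::euclidean_space \<Rightarrow> 'u \<Rightarrow> real"
  assumes "m \<ge> 1" "p \<ge> 1"
  shows "prox_minimizer (vartheta f g \<xi> m p x) (tdir f g \<xi> m p x)"
proof -
  have "f 1 x (\<xi> 1) - Phi f \<xi> p 1 x + g 1 1 x \<bullet> t \<le> vartheta f g \<xi> m p x t" for t
    using vartheta_ge[of 1 m 1 p f x \<xi> g t] assms by force
  then obtain t where t: "prox_minimizer (vartheta f g \<xi> m p x) t"
    using prox_minimizer_exists[OF continuous_on_vartheta[OF assms]] by blast
  show ?thesis
    unfolding tdir_def prox_minimizer_def[symmetric]
    by (rule theI[of "prox_minimizer (vartheta f g \<xi> m p x)", OF t])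
      (rule prox_minimizer_unique[OF convex_on_vartheta[OF assms] _ t])
qed

lemma alg1_upto_step:
  assumes "alg1_upto f g \<xi> m p \<epsilon> \<beta> xs k"
  obtains \<alpha> where "\<alpha> > 0" "xs (Suc k) = xs k + \<alpha> *\<^sub>R tdir f g \<xi> m p (xs k)"
proof -
  from assms obtain \<alpha> r where "\<alpha> = 1 / 2 ^ r" "xs (Suc k) = xs k + \<alpha> *\<^sub>R tdir f g \<xi> m p (xs k)"
    unfolding alg1_upto_def by blast
  then show thesis
    by (intro that[of \<alpha>]) simp_all
qed

theorem lemma4p3:
  fixes f :: "nat \<Rightarrow> real^'n \<Rightarrow> real^'k \<Rightarrow> real"
    and g :: "nat \<Rightarrow> nat \<Rightarrow> real^'n \<Rightarrow> real^'n"
    and \<xi> :: "nat \<Rightarrow> real^'k"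
    and m p :: nat and \<epsilon> \<beta> :: real
    and xs :: "nat \<Rightarrow> real^'n" and xt :: "real^'n" and k :: nat
  assumes "m \<ge> 1" and "p \<ge> 1"
    and grad: "\<And>j i x. j \<in> {1..m} \<Longrightarrow> i \<in> {1..p} \<Longrightarrow>
                 ((\<lambda>y. f j y (\<xi> i)) has_derivative (\<lambda>h. g j i x \<bullet> h)) (at x)"
    and contgrad: "\<And>j i. j \<in> {1..m} \<Longrightarrow> i \<in> {1..p} \<Longrightarrow> continuous_on UNIV (g j i)"
    and conv: "\<And>j i. j \<in> {1..m} \<Longrightarrow> i \<in> {1..p} \<Longrightarrow> convex_on UNIV (\<lambda>y. f j y (\<xi> i))"
    and "\<epsilon> > 0" and "0 < \<beta>" and "\<beta> < 1"
    and alg: "alg1_upto f g \<xi> m p \<epsilon> \<beta> xs k"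
    and le: "\<And>i j. i \<in> {1..p} \<Longrightarrow> j \<in> {1..m} \<Longrightarrow> f j xt (\<xi> i) \<le> f j (xs k) (\<xi> i)"
  shows "(norm (xt - xs (Suc k)))\<^sup>2 \<le> (norm (xt - xs k))\<^sup>2 + (norm (xs k - xs (Suc k)))\<^sup>2"
proof -
  define t where "t = tdir f g \<xi> m p (xs k)"
  have descent: "g j i (xs k) \<bullet> (xt - xs k) \<le> 0" if "j \<in> {1..m}" "i \<in> {1..p}" for j i
    using convex_on_above_derivative[OF conv grad, of j i "xs k" xt] le[of i j] that by simp
  have "0 \<le> t \<bullet> (xt - xs k)"
    unfolding t_def using \<open>m \<ge> 1\<close> \<open>p \<ge> 1\<close>
    by (intro prox_minimizer_inner_nonneg[OF tdir_prox_minimizer] vartheta_descent descent)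
  moreover obtain \<alpha> where "\<alpha> > 0" and step: "xs (Suc k) = xs k + \<alpha> *\<^sub>R t"
    using alg1_upto_step[OF alg] unfolding t_def .
  moreover have "xt - xs (Suc k) = (xt - xs k) - \<alpha> *\<^sub>R t" "xs k - xs (Suc k) = - (\<alpha> *\<^sub>R t)"
    using step by simp_all
  ultimately show ?thesis
    using norm_diff_scaleR_square_le[of \<alpha> t "xt - xs k"] by (simp only: norm_minus_cancel)
qed

end
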